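(* In the setting of the preceding lemma (series inversion), assume in addition that $I=[-r,r]$ for some $r>0$, $x_*\in I$, and $$\tfrac{(2n+2)\|a_{2n+2}\|_{L^\infty(I)}}{(2n+1)a_{2n+1}}(r+|x_*|)<1,\qquad \tfrac{\|a_{2n+2}\|_{L^\infty(I)}}{a_{2n+1}R_n}(r+|x_*|)<\tfrac14.$$ Then for all $x\in I$, $$\Bigl|(x-x_* )-\Bigl(\tfrac{y(x)-y_*}{a_{2n+1}}\Bigr)^{\frac1{2n+1}}\Bigr|\le\tfrac{4M_n\|a_{2n+2}\|_{L^\infty(I)}}{a_{2n+1}R_n}\Bigl|\tfrac{y(x)-y_*}{a_{2n+1}}\Bigr|^{\frac2{2n+1}},$$ and the range of $y$ contains the interval $\{|y-y_*|\le\frac{a_{2n+1}(r-|x_*|)^{2n+1}}{2n+2}\}$.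
   Context: Setting: $n\ge1$, $y\in C^{2n+1,1}(I)$ with $y(x)=y_*+a_{2n+1}(x-x_* )^{2n+1}+a_{2n+2}(x)(x-x_* )^{2n+2}$ on $I$, $a_{2n+1}>0$ constant, $a_{2n+2}:I\to\mathbb R$ continuous; $s^{1/(2n+1)}$ is the real odd root. The sequence $c_j^n$: $c_0^n=1$, $c_m^n=\sum_{\ell_1+\dots+\ell_{2n+2}=m-1}\prod c^n_{\ell_i}-\tfrac1{2n+1}\sum_{j_1+\dots+j_{2n+1}=m,\ 0\le j_i\le m-1}\prod c^n_{j_i}$. $\bar y_n(z):=\sum_{j\ge0}\frac{(-1)^j}{(2n+1)^j}c_j^nz^j$, with radius of convergence $R_n:=\frac{2n+1}{\limsup_j|c_j^n|^{1/j}}>0$, and $M_n:=\max_{|z|=3R_n/4}|\bar y_n(z)|$ ($z\in\mathbb C$). *)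

theory Defs
  imports "HOL-Analysis.Analysis" "HOL-Library.Liminf_Limsup"
begin

text \<open>One step of the recursion for the sequence c_j^n: given the list
  [c_0, ..., c_(m-1)] (of length m), compute c_m.\<close>
definition cnext :: "nat \<Rightarrow> real list \<Rightarrow> real" where
  "cnext n cs = (let m = length cs in
     if m = 0 then 1 else
       (\<Sum>f\<in>{f \<in> {..<2*n+2} \<rightarrow>\<^sub>E {..<m}. sum f {..<2*n+2} = m - 1}.
           \<Prod>i<2*n+2. cs ! f i)
       - 1 / real (2*n+1) *
       (\<Sum>f\<in>{f \<in> {..<2*n+1} \<rightarrow>\<^sub>E {..<m}. sum f {..<2*n+1} = m}.
           \<Prod>i<2*n+1. cs ! f i))"

primrec clist :: "nat \<Rightarrow> nat \<Rightarrow> real list" where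
  "clist n 0 = []"
| "clist n (Suc m) = clist n m @ [cnext n (clist n m)]"

definition c :: "nat \<Rightarrow> nat \<Rightarrow> real" where
  "c n j = clist n (Suc j) ! j"

definition ybar :: "nat \<Rightarrow> complex \<Rightarrow> complex" where
  "ybar n z = (\<Sum>j. complex_of_real ((-1)^j / real (2*n+1)^j * c n j) * z^j)"

definition R :: "nat \<Rightarrow> real" where
  "R n = real_of_ereal (ereal (real (2*n+1)) / limsup (\<lambda>j. ereal (root j \<bar>c n j\<bar>)))"

definition M :: "nat \<Rightarrow> real" where
  "M n = Sup ((\<lambda>z. cmod (ybar n z)) ` {z. cmod z = 3 * R n / 4})"

definition C_k_1_on :: "nat \<Rightarrow> real set \<Rightarrow> (real \<Rightarrow> real) \<Rightarrow> bool" where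
  "C_k_1_on k I y \<longleftrightarrow> (\<exists>D :: nat \<Rightarrow> real \<Rightarrow> real.
      (\<forall>x\<in>I. D 0 x = y x) \<and>
      (\<forall>j<k. \<forall>x\<in>I. (D j has_real_derivative D (Suc j) x) (at x within I)) \<and>
      (\<exists>L. lipschitz_on L I (D k)))"

end

theory Submission
  imports Defs "HOL-Analysis.FPS_Convergence" "HOL-Real_Asymp.Real_Asymp"
    "HOL-Complex_Analysis.Cauchy_Integral_Formula"
begin

text \<open>
  With q = 2n+1, w = x - x_* and e = a_{2n+2}(x)/a_{2n+1} one has (y(x) - y_*)/a_{2n+1} = w^q (1 + e w),
  so the error is w (1 - (1 + e w)^{1/q}). For u^q \<ge> 2/3 the elementary bound
  |1 - u| \<le> (3/q) |u^q - 1| u^2 yields the estimate with constant 3 A/(q a_{2n+1}), and this is at most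
  the stated constant because Cauchy's inequality on the circle of radius 3R_n/4, together with
  ybar_n'(0) = -1/q, gives M_n \<ge> 3R_n/(4q). The smallness |e w| \<le> 1/3 follows from the second
  hypothesis since R_n < 4/3.

  The generating function B of c^n satisfies B^q = 1 + q X B^{q+1}. Differentiating gives a recursion
  with nonnegative terms, whence c^n_m \<ge> (2n+2)^{m-1}/m and R_n < 4/3; comparing partial sums of B
  at x = 2^{-(2n+4)} with 1 + x B^{q+1} shows that c^n_m grows at most geometrically, so R_n > 0.

  For the range, the first hypothesis gives a_{2n+1} + a_{2n+2}(x)(x - x_*) \<ge> a_{2n+1}/(2n+2) on [-r, r];
  since q is odd, y(-r) and y(r) lie on either side of the target interval and the intermediate value
  theorem applies.
\<close>

section \<open>Weak compositions and coefficients of products of power series\<close>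

definition weak_compositions :: "nat \<Rightarrow> nat \<Rightarrow> (nat \<Rightarrow> nat) set" where
  "weak_compositions k N = {g \<in> {..<k} \<rightarrow>\<^sub>E {..N}. sum g {..<k} = N}"

lemma finite_weak_compositions: "finite (weak_compositions k N)"
  unfolding weak_compositions_def by (rule finite_subset[of _ "{..<k} \<rightarrow>\<^sub>E {..N}"]) (auto intro: finite_PiE)

lemma weak_compositions_0: "weak_compositions 0 N = (if N = 0 then {\<lambda>_. undefined} else {})"
  by (auto simp: weak_compositions_def PiE_def extensional_def)

lemma sum_weak_compositions_Suc:
  "(\<Sum>g\<in>weak_compositions (Suc k) N. h g) = (\<Sum>a=0..N. \<Sum>g\<in>weak_compositions k a. h (g(k := N - a)))"
proof -
  have "(\<Sum>g\<in>weak_compositions (Suc k) N. h g) = (\<Sum>a=0..N. \<Sum>g\<in>{g\<in>weak_compositions (Suc k) N. N - g k = a}. h g)"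
    by (rule sum.group[symmetric]) (auto simp: finite_weak_compositions)
  also have "\<dots> = (\<Sum>a=0..N. \<Sum>g\<in>weak_compositions k a. h (g(k := N - a)))"
  proof (rule sum.cong[OF refl])
    fix a assume a: "a \<in> {0..N}"
    show "(\<Sum>g\<in>{g\<in>weak_compositions (Suc k) N. N - g k = a}. h g) = (\<Sum>g\<in>weak_compositions k a. h (g(k := N - a)))"
    proof (rule sum.reindex_bij_witness[where i="\<lambda>g. g(k := N - a)" and j="\<lambda>g. g(k := undefined)"])
      fix g assume "g \<in> {g\<in>weak_compositions (Suc k) N. N - g k = a}"
      then have g: "g \<in> {..<Suc k} \<rightarrow>\<^sub>E {..N}" "sum g {..<Suc k} = N" "N - g k = a"
        by (auto simp: weak_compositions_def)
      then have "g k \<le> N" by auto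
      then have "N - a = g k" using g(3) by simp
      then have upd: "(g(k := undefined))(k := N - a) = g" by simp
      then show "(g(k := undefined))(k := N - a) = g" .
      from upd show "h ((g(k := undefined))(k := N - a)) = h g" by simp
      have sum_g: "sum g {..<k} = a" using g \<open>g k \<le> N\<close> by simp
      have "g i \<le> a" if "i < k" for i
        using sum_g member_le_sum[of i "{..<k}" g] that by auto
      then have "g(k := undefined) \<in> {..<k} \<rightarrow>\<^sub>E {..a}"
        using g(1) by (auto simp: PiE_def extensional_def Pi_def)
      moreover have "sum (g(k := undefined)) {..<k} = sum g {..<k}"
        by (rule sum.cong) auto
      ultimately show "g(k := undefined) \<in> weak_compositions k a"
        using sum_g by (simp add: weak_compositions_def)
    next
      fix g assume "g \<in> weak_compositions k a"
      then have g: "g \<in> {..<k} \<rightarrow>\<^sub>E {..a}" "sum g {..<k} = a" by (auto simp: weak_compositions_def)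
      then have "g k = undefined" by (auto simp: PiE_def extensional_def)
      then show "(g(k := N - a))(k := undefined) = g" by auto
      have "sum (g(k := N - a)) {..<k} = sum g {..<k}"
        by (rule sum.cong) auto
      then have "sum (g(k := N - a)) {..<Suc k} = N" using g(2) a by simp
      moreover have "g(k := N - a) \<in> {..<Suc k} \<rightarrow>\<^sub>E {..N}"
        using g(1) a by (auto simp: PiE_def extensional_def Pi_def less_Suc_eq intro: order.trans)
      ultimately show "g(k := N - a) \<in> {g\<in>weak_compositions (Suc k) N. N - g k = a}"
        using a by (simp add: weak_compositions_def)
    qed
  qed
  finally show ?thesis .
qed

lemma fps_nth_prod_weak_compositions:
  fixes F :: "nat \<Rightarrow> 'a::comm_ring_1 fps"
  shows "fps_nth (\<Prod>i<k. F i) N = (\<Sum>g\<in>weak_compositions k N. \<Prod>i<k. fps_nth (F i) (g i))"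
proof (induction k arbitrary: N)
  case 0
  then show ?case by (simp add: weak_compositions_0)
next
  case (Suc k)
  have "fps_nth (\<Prod>i<Suc k. F i) N = (\<Sum>a=0..N. fps_nth (\<Prod>i<k. F i) a * fps_nth (F k) (N - a))"
    by (simp add: fps_mult_nth)
  also have "\<dots> = (\<Sum>a=0..N. \<Sum>g\<in>weak_compositions k a. (\<Prod>i<k. fps_nth (F i) (g i)) * fps_nth (F k) (N - a))"
    by (simp add: Suc sum_distrib_right)
  also have "\<dots> = (\<Sum>g\<in>weak_compositions (Suc k) N. \<Prod>i<Suc k. fps_nth (F i) (g i))"
    unfolding sum_weak_compositions_Suc by (simp add: mult.commute)
  finally show ?case .
qed

lemma weak_compositions_eq_Un_single_part:
  assumes "m \<ge> 1"
  shows "weak_compositions k m = {f \<in> {..<k} \<rightarrow>\<^sub>E {..<m}. sum f {..<k} = m} \<union>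
           (\<lambda>i j. if j < k then if j = i then m else 0 else undefined) ` {..<k}"
    (is "_ = ?S \<union> ?e ` _")
proof (intro equalityI subsetI)
  fix f assume "f \<in> weak_compositions k m"
  then have f: "f \<in> {..<k} \<rightarrow>\<^sub>E {..m}" "sum f {..<k} = m" by (auto simp: weak_compositions_def)
  show "f \<in> ?S \<union> ?e ` {..<k}"
  proof (cases "\<exists>i<k. f i = m")
    case True
    then obtain i where i: "i < k" "f i = m" by auto
    have "f j = 0" if "j < k" "j \<noteq> i" for j
    proof -
      have "f i + f j = sum f {i, j}" using that by simp
      also have "\<dots> \<le> sum f {..<k}" using i that by (intro sum_mono2) auto
      finally show ?thesis using f i by simp
    qed
    then have "f = ?e i" using f(1) i by (auto simp: PiE_def extensional_def)
    then show ?thesis using i by auto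
  next
    case False
    then show ?thesis using f by (auto simp: PiE_def Pi_def le_less)
  qed
next
  fix f assume "f \<in> ?S \<union> ?e ` {..<k}"
  then show "f \<in> weak_compositions k m"
  proof
    assume "f \<in> ?S" then show ?thesis by (auto simp: weak_compositions_def PiE_def Pi_def)
  next
    assume "f \<in> ?e ` {..<k}"
    then obtain i where i: "i < k" "f = ?e i" by auto
    have "sum (?e i) {..<k} = (\<Sum>j<k. if j = i then m else 0)"
      by (rule sum.cong) auto
    then have "sum (?e i) {..<k} = m" using i by simp
    then show ?thesis using i by (auto simp: weak_compositions_def split: if_splits)
  qed
qed

lemma sum_prod_weak_compositions_split:
  fixes a :: "nat \<Rightarrow> 'a::comm_semiring_1"
  assumes m: "m \<ge> 1" and a_0: "a 0 = 1"
  shows "(\<Sum>f\<in>weak_compositions k m. \<Prod>i<k. a (f i)) =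
         (\<Sum>f\<in>{f \<in> {..<k} \<rightarrow>\<^sub>E {..<m}. sum f {..<k} = m}. \<Prod>i<k. a (f i)) + of_nat k * a m"
proof -
  define S where "S = {f \<in> {..<k} \<rightarrow>\<^sub>E {..<m}. sum f {..<k} = m}"
  define e where "e = (\<lambda>i j. if j < k then if j = i then m else 0 else undefined)"
  have decomp: "weak_compositions k m = S \<union> e ` {..<k}"
    unfolding weak_compositions_eq_Un_single_part[OF m] S_def e_def ..
  have disj: "S \<inter> e ` {..<k} = {}"
    using m by (auto simp: S_def e_def PiE_def Pi_def)
  have inj: "inj_on e {..<k}"
  proof
    fix i j assume "i \<in> {..<k}" "j \<in> {..<k}" "e i = e j"
    then have "e i i = e j i" by simp
    with \<open>i \<in> {..<k}\<close> m show "i = j" by (auto simp: e_def split: if_splits)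
  qed
  have prod_e: "(\<Prod>j<k. a (e i j)) = a m" if "i < k" for i
  proof -
    have "(\<Prod>j<k. a (e i j)) = a (e i i) * (\<Prod>j\<in>{..<k} - {i}. a (e i j))"
      using that by (subst prod.remove[of _ i]) auto
    also have "(\<Prod>j\<in>{..<k} - {i}. a (e i j)) = 1"
      by (rule prod.neutral) (auto simp: e_def a_0)
    finally show ?thesis using that by (simp add: e_def)
  qed
  have "(\<Sum>f\<in>weak_compositions k m. \<Prod>i<k. a (f i)) = (\<Sum>f\<in>S. \<Prod>i<k. a (f i)) + (\<Sum>f\<in>e ` {..<k}. \<Prod>i<k. a (f i))"
    unfolding decomp using disj finite_weak_compositions[of k m] by (intro sum.union_disjoint) (auto simp: decomp)
  also have "(\<Sum>f\<in>e ` {..<k}. \<Prod>i<k. a (f i)) = (\<Sum>i<k. \<Prod>j<k. a (e i j))"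
    using inj by (simp add: sum.reindex)
  also have "\<dots> = of_nat k * a m" using prod_e by simp
  finally show ?thesis by (simp add: S_def)
qed

lemma sum_prod_weak_compositions_le_power:
  fixes a :: "nat \<Rightarrow> real"
  assumes a: "\<And>j. a j \<ge> 0"
  shows "(\<Sum>k<N. \<Sum>g\<in>weak_compositions p k. \<Prod>i<p. a (g i)) \<le> (\<Sum>j<N. a j) ^ p"
proof -
  define T where "T g = (\<Prod>i<p. a (g i))" for g
  have "(\<Sum>k<N. \<Sum>g\<in>weak_compositions p k. T g) = sum T (\<Union>k<N. weak_compositions p k)"
    by (rule sum.UNION_disjoint[symmetric])
       (auto simp: finite_weak_compositions, auto simp: weak_compositions_def)
  also have "\<dots> \<le> sum T ({..<p} \<rightarrow>\<^sub>E {..<N})"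
  proof (rule sum_mono2)
    show "finite ({..<p} \<rightarrow>\<^sub>E {..<N})" by (auto intro: finite_PiE)
    show "(\<Union>k<N. weak_compositions p k) \<subseteq> {..<p} \<rightarrow>\<^sub>E {..<N}"
      by (force simp: weak_compositions_def PiE_def Pi_def)
    show "0 \<le> T g" for g unfolding T_def by (intro prod_nonneg a)
  qed
  also have "\<dots> = (\<Prod>i<p. \<Sum>j<N. a j)"
    unfolding T_def by (rule prod_sum_PiE[symmetric]) auto
  also have "\<dots> = (\<Sum>j<N. a j) ^ p" by simp
  finally show ?thesis unfolding T_def .
qed

section \<open>The sequence \<open>c n\<close> and its generating function\<close>

lemma length_clist[simp]: "length (clist n m) = m"
  by (induction m) auto

lemma clist_nth: "j < m \<Longrightarrow> clist n m ! j = c n j"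
proof (induction m)
  case 0 then show ?case by simp
next
  case (Suc m)
  show ?case
  proof (cases "j < m")
    case True with Suc show ?thesis by (simp add: nth_append)
  next
    case False then have "j = m" using Suc by simp
    then show ?thesis by (simp add: c_def)
  qed
qed

lemma c_eq_cnext: "c n m = cnext n (clist n m)"
  by (simp add: c_def nth_append)

lemma c_0[simp]: "c n 0 = 1"
  by (simp add: c_eq_cnext cnext_def)

lemma c_recurrence:
  assumes "m \<ge> 1"
  shows "c n m = (\<Sum>f\<in>weak_compositions (2*n+2) (m-1). \<Prod>i<2*n+2. c n (f i))
       - 1 / real (2*n+1) * (\<Sum>f\<in>{f \<in> {..<2*n+1} \<rightarrow>\<^sub>E {..<m}. sum f {..<2*n+1} = m}. \<Prod>i<2*n+1. c n (f i))"
proof -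
  have comps: "{f \<in> {..<2*n+2} \<rightarrow>\<^sub>E {..<m}. sum f {..<2*n+2} = m - 1} = weak_compositions (2*n+2) (m-1)"
    using assms unfolding weak_compositions_def by (cases m) (auto simp: lessThan_Suc_atMost)
  have clist_c: "(\<Prod>i<k. clist n m ! f i) = (\<Prod>i<k. c n (f i))" if "f \<in> {..<k} \<rightarrow>\<^sub>E {..<m}" for f k
    using that by (intro prod.cong refl clist_nth) auto
  have "m \<noteq> 0" using assms by simp
  then show ?thesis
    unfolding c_eq_cnext[of n m] cnext_def Let_def length_clist comps[symmetric] if_not_P[OF \<open>m \<noteq> 0\<close>]
    by (intro arg_cong2[where f = minus] arg_cong2[where f = times] refl sum.cong clist_c) auto
qed

definition c_fps :: "nat \<Rightarrow> real fps" where "c_fps n = Abs_fps (c n)"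

lemma c_fps_power_nth: "fps_nth (c_fps n ^ k) N = (\<Sum>g\<in>weak_compositions k N. \<Prod>i<k. c n (g i))"
proof -
  have "c_fps n ^ k = (\<Prod>i<k. c_fps n)" by simp
  then show ?thesis by (simp only: fps_nth_prod_weak_compositions) (simp add: c_fps_def)
qed

lemma c_fps_power_eq: "c_fps n ^ (2*n+1) = 1 + fps_const (real (2*n+1)) * fps_X * c_fps n ^ (2*n+2)"
proof (rule fps_ext)
  fix m
  show "fps_nth (c_fps n ^ (2*n+1)) m = fps_nth (1 + fps_const (real (2*n+1)) * fps_X * c_fps n ^ (2*n+2)) m"
  proof (cases "m = 0")
    case True
    then show ?thesis by (simp add: c_fps_def fps_power_zeroth)
  next
    case False
    then have m: "m \<ge> 1" by simp
    have "fps_nth (c_fps n ^ (2*n+1)) m = (\<Sum>f\<in>{f \<in> {..<2*n+1} \<rightarrow>\<^sub>E {..<m}. sum f {..<2*n+1} = m}. \<Prod>i<2*n+1. c n (f i)) + real (2*n+1) * c n m"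
      unfolding c_fps_power_nth by (rule sum_prod_weak_compositions_split[OF m]) simp
    also have "\<dots> = real (2*n+1) * fps_nth (c_fps n ^ (2*n+2)) (m-1)"
      unfolding c_fps_power_nth c_recurrence[OF m] by (simp add: field_simps)
    finally show ?thesis using m by (cases m) (simp_all add: mult.assoc)
  qed
qed

lemma c_fps_nonzero: "c_fps n \<noteq> 0"
proof
  assume "c_fps n = 0"
  then have "fps_nth (c_fps n) 0 = 0" by simp
  then show False by (simp add: c_fps_def)
qed

lemma fps_deriv_c_fps:
  "fps_deriv (c_fps n) = c_fps n ^ 2 + of_nat (2*n+2) * fps_X * fps_deriv (c_fps n) * c_fps n"
proof -
  define q where "q = 2*n+1"
  define b where "b = c_fps n"
  define d where "d = fps_deriv b"
  have eq: "b ^ q = 1 + fps_const (real q) * fps_X * b ^ (q+1)"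
    using c_fps_power_eq[of n] by (simp add: q_def b_def)
  have "fps_deriv (b ^ q) = fps_deriv (1 + fps_const (real q) * fps_X * b ^ (q+1))"
    by (simp only: eq)
  moreover have "fps_deriv (b ^ q) = of_nat q * d * b ^ (q - 1)"
    unfolding d_def by (rule fps_deriv_power')
  moreover have "fps_deriv (b ^ (q+1)) = of_nat (q+1) * d * b ^ q"
    unfolding d_def using fps_deriv_power'[of b "q+1"] by simp
  moreover have "fps_deriv (1 + fps_const (real q) * fps_X * b ^ (q+1)) =
     fps_const (real q) * (fps_X * fps_deriv (b ^ (q+1)) + b ^ (q+1))"
    by (simp only: fps_deriv_add fps_deriv_mult mult.assoc fps_deriv_fps_X) simp
  ultimately have "of_nat q * d * b ^ (q - 1) =
     fps_const (real q) * (fps_X * (of_nat (q+1) * d * b ^ q) + b ^ (q+1))"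
    by simp
  moreover have "b ^ q = b * b ^ (q - 1)" "b ^ (q+1) = b * b * b ^ (q - 1)"
    by (simp_all add: q_def power2_eq_square)
  ultimately have "of_nat q * (d * b ^ (q - 1)) =
     of_nat q * ((b * b + of_nat (q+1) * fps_X * d * b) * b ^ (q - 1))"
    by (simp add: fps_of_nat algebra_simps)
  moreover have "(of_nat q :: real fps) \<noteq> 0"
  proof -
    have "fps_const (real q) \<noteq> 0" by (simp add: q_def)
    then show ?thesis by (metis fps_of_nat)
  qed
  ultimately have "d * b ^ (q - 1) = (b * b + of_nat (q+1) * fps_X * d * b) * b ^ (q - 1)"
    by simp
  moreover have "b ^ (q - 1) \<noteq> 0" using c_fps_nonzero[of n] by (simp add: b_def)
  ultimately have "d = b * b + of_nat (q+1) * fps_X * d * b" using mult_right_cancel by blast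
  then show ?thesis by (simp add: d_def b_def q_def power2_eq_square)
qed

lemma c_derivative_recurrence:
  "real (m+1) * c n (m+1) = (\<Sum>i=0..m. c n i * c n (m - i)) +
     (if m = 0 then 0 else real (2*n+2) * (\<Sum>i=0..m-1. real (i+1) * c n (i+1) * c n (m - 1 - i)))"
proof -
  have "fps_nth (fps_deriv (c_fps n)) m = fps_nth (c_fps n ^ 2 + of_nat (2*n+2) * fps_X * fps_deriv (c_fps n) * c_fps n) m"
    by (subst fps_deriv_c_fps) (rule refl)
  also have "of_nat (2*n+2) * fps_X * fps_deriv (c_fps n) * c_fps n = fps_X * (fps_const (real (2*n+2)) * (fps_deriv (c_fps n) * c_fps n))"
    by (simp add: fps_of_nat algebra_simps del: of_nat_Suc of_nat_add)
  finally have "fps_nth (fps_deriv (c_fps n)) m = fps_nth (c_fps n * c_fps n) m +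
     (if m = 0 then 0 else real (2*n+2) * fps_nth (fps_deriv (c_fps n) * c_fps n) (m - 1))"
    by (simp only: fps_add_nth fps_X_mult_nth power2_eq_square fps_mult_left_const_nth)
  then show ?thesis
    by (simp only: fps_mult_nth fps_deriv_nth c_fps_def fps_nth_Abs_fps)
qed

lemma c_nonneg: "c n m \<ge> 0"
proof (induction m rule: less_induct)
  case (less m)
  show ?case
  proof (cases m)
    case 0 then show ?thesis by simp
  next
    case (Suc k)
    have IH: "\<And>j. j \<le> k \<Longrightarrow> c n j \<ge> 0" using less Suc by simp
    have s1: "(\<Sum>i=0..k. c n i * c n (k - i)) \<ge> 0"
      by (rule sum_nonneg) (simp add: IH)
    have s2: "(\<Sum>i=0..k-1. real (i+1) * c n (i+1) * c n (k - 1 - i)) \<ge> 0" if "k \<noteq> 0"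
    proof (rule sum_nonneg)
      fix i assume "i \<in> {0..k-1}"
      then have "i + 1 \<le> k" "k - 1 - i \<le> k" using that by auto
      then show "real (i+1) * c n (i+1) * c n (k - 1 - i) \<ge> 0" by (simp add: IH)
    qed
    have "real (k+1) * c n (k+1) \<ge> 0"
      using s1 s2 c_derivative_recurrence[of k n] by (cases "k = 0") simp_all
    then show ?thesis using Suc by (simp add: zero_le_mult_iff)
  qed
qed

lemma c_1: "c n 1 = 1"
  using c_derivative_recurrence[of 0 n] by simp

lemma c_step_lower_bound:
  assumes "m \<ge> 1"
  shows "real (m+1) * c n (m+1) \<ge> real (2*n+2) * (real m * c n m)"
proof -
  have "real m * c n m \<le> (\<Sum>i=0..m-1. real (i+1) * c n (i+1) * c n (m - 1 - i))"
  proof -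
    have "real m * c n m = real ((m-1)+1) * c n ((m-1)+1) * c n (m - 1 - (m-1))"
      using assms by simp
    also have "\<dots> \<le> (\<Sum>i=0..m-1. real (i+1) * c n (i+1) * c n (m - 1 - i))"
      by (rule member_le_sum) (auto intro!: mult_nonneg_nonneg c_nonneg)
    finally show ?thesis .
  qed
  then have "real (2*n+2) * (real m * c n m) \<le> real (2*n+2) * (\<Sum>i=0..m-1. real (i+1) * c n (i+1) * c n (m - 1 - i))"
    by (intro mult_left_mono) auto
  also have "\<dots> \<le> real (m+1) * c n (m+1)"
    using assms c_derivative_recurrence[of m n] sum_nonneg[of "{0..m}" "\<lambda>i. c n i * c n (m - i)"] by (simp add: c_nonneg)
  finally show ?thesis .
qed

lemma c_lower_bound:
  assumes "m \<ge> 1"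
  shows "c n m \<ge> real (2*n+2) ^ (m-1) / real m"
  using assms
proof (induction m rule: dec_induct)
  case base then show ?case using c_1[of n] by simp
next
  case (step m)
  have "real (2*n+2) ^ (Suc m - 1) / real (Suc m) = real (2*n+2) * (real m * (real (2*n+2) ^ (m-1) / real m)) / real (m+1)"
    using step(1) by (cases m) auto
  also have "\<dots> \<le> real (2*n+2) * (real m * c n m) / real (m+1)"
    using step by (intro divide_right_mono mult_left_mono) auto
  also have "\<dots> \<le> c n (m+1)"
    using c_step_lower_bound[OF step(1), of n] by (simp add: field_simps)
  finally show ?case by simp
qed

lemma c_le_nth_c_fps_power:
  assumes "m \<ge> 1"
  shows "c n m \<le> fps_nth (c_fps n ^ (2*n+2)) (m-1)"
proof -
  have "0 \<le> (\<Sum>f\<in>{f \<in> {..<2*n+1} \<rightarrow>\<^sub>E {..<m}. sum f {..<2*n+1} = m}. \<Prod>i<2*n+1. c n (f i))"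
    by (intro sum_nonneg prod_nonneg c_nonneg)
  then show ?thesis unfolding c_fps_power_nth c_recurrence[OF assms] by simp
qed

definition c_partial_sum :: "nat \<Rightarrow> real \<Rightarrow> nat \<Rightarrow> real" where
  "c_partial_sum n x N = (\<Sum>m\<le>N. c n m * x ^ m)"

lemma c_partial_sum_nonneg: "x \<ge> 0 \<Longrightarrow> c_partial_sum n x N \<ge> 0"
  unfolding c_partial_sum_def by (intro sum_nonneg mult_nonneg_nonneg c_nonneg) auto

lemma c_partial_sum_le:
  assumes x: "x \<ge> 0" and N: "N \<ge> 1"
  shows "c_partial_sum n x N \<le> 1 + x * c_partial_sum n x (N-1) ^ (2*n+2)"
proof -
  define p where "p = 2*n+2"
  have "c_partial_sum n x N = 1 + (\<Sum>m\<in>{1..N}. c n m * x ^ m)"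
    unfolding c_partial_sum_def by (subst atMost_atLeast0) (simp add: sum.atLeast_Suc_atMost)
  also have "(\<Sum>m\<in>{1..N}. c n m * x ^ m) \<le> (\<Sum>m\<in>{1..N}. fps_nth (c_fps n ^ p) (m-1) * x ^ m)"
    using c_le_nth_c_fps_power x by (intro sum_mono mult_right_mono) (auto simp: p_def)
  also have "\<dots> = x * (\<Sum>k<N. fps_nth (c_fps n ^ p) k * x ^ k)"
  proof -
    have "(\<Sum>m\<in>{1..N}. fps_nth (c_fps n ^ p) (m-1) * x ^ m) = (\<Sum>k<N. fps_nth (c_fps n ^ p) k * x ^ (Suc k))"
      by (rule sum.reindex_bij_witness[where i=Suc and j="\<lambda>m. m - 1"]) auto
    then show ?thesis by (simp add: sum_distrib_left algebra_simps)
  qed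
  also have "(\<Sum>k<N. fps_nth (c_fps n ^ p) k * x ^ k) =
      (\<Sum>k<N. \<Sum>g\<in>weak_compositions p k. \<Prod>i<p. c n (g i) * x ^ (g i))"
  proof (intro sum.cong refl)
    fix k
    have "x ^ k = (\<Prod>i<p. x ^ g i)" if "g \<in> weak_compositions p k" for g
      using that power_sum[of x g "{..<p}"] by (simp add: weak_compositions_def)
    then show "fps_nth (c_fps n ^ p) k * x ^ k = (\<Sum>g\<in>weak_compositions p k. \<Prod>i<p. c n (g i) * x ^ (g i))"
      unfolding c_fps_power_nth sum_distrib_right by (intro sum.cong refl) (simp add: prod.distrib)
  qed
  also have "\<dots> \<le> (\<Sum>j<N. c n j * x ^ j) ^ p"
    using x by (intro sum_prod_weak_compositions_le_power mult_nonneg_nonneg c_nonneg) auto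
  also have "(\<Sum>j<N. c n j * x ^ j) = c_partial_sum n x (N-1)"
    using N by (simp add: c_partial_sum_def lessThan_Suc_atMost[symmetric])
  finally show ?thesis using x by (simp add: p_def mult_left_mono)
qed

lemma c_partial_sum_le_2: "c_partial_sum n (1 / 2^(2*n+4)) N \<le> 2"
proof (induction N)
  case 0 then show ?case by (simp add: c_partial_sum_def)
next
  case (Suc N)
  define x :: real where "x = 1 / 2^(2*n+4)"
  have x0: "x \<ge> 0" by (simp add: x_def)
  have "c_partial_sum n x (Suc N) \<le> 1 + x * c_partial_sum n x N ^ (2*n+2)"
    using c_partial_sum_le[OF x0, of "Suc N" n] by simp
  also have "\<dots> \<le> 1 + x * 2 ^ (2*n+2)"
    using Suc c_partial_sum_nonneg[OF x0, of n N] x0 unfolding x_def[symmetric]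
    by (intro add_left_mono mult_left_mono power_mono) auto
  also have "x * 2 ^ (2*n+2) = 1/4" by (simp add: x_def power_add)
  finally show ?case by (simp add: x_def)
qed

lemma c_upper_bound: "c n m \<le> 2 * (2^(2*n+4)) ^ m"
proof -
  define x :: real where "x = 1 / 2^(2*n+4)"
  have "c n m * x ^ m \<le> c_partial_sum n x m"
    unfolding c_partial_sum_def by (rule member_le_sum) (auto intro!: mult_nonneg_nonneg c_nonneg simp: x_def)
  also have "\<dots> \<le> 2" unfolding x_def by (rule c_partial_sum_le_2)
  finally have "c n m * x ^ m \<le> 2" .
  then show ?thesis by (simp add: x_def field_simps power_one_over)
qed

section \<open>The radius \<open>R n\<close> and Cauchy's inequality for \<open>M n\<close>\<close>

definition c_root_limsup :: "nat \<Rightarrow> ereal" where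
  "c_root_limsup n = limsup (\<lambda>j. ereal (root j \<bar>c n j\<bar>))"

lemma root_c_upper_bound: "root j \<bar>c n j\<bar> \<le> 2^(2*n+5)"
proof (cases "j = 0")
  case True then show ?thesis by simp
next
  case False
  have "\<bar>c n j\<bar> = c n j" using c_nonneg by simp
  also have "\<dots> \<le> 2 * (2^(2*n+4)) ^ j" by (rule c_upper_bound)
  also have "\<dots> \<le> (2^(2*n+5)) ^ j"
  proof -
    have "(2::real) ^ 1 \<le> 2 ^ j" using False by (intro power_increasing) auto
    then have "2 * (2^(2*n+4)) ^ j \<le> (2::real) ^ j * (2^(2*n+4)) ^ j" by (intro mult_right_mono) auto
    also have "\<dots> = (2 * 2^(2*n+4)) ^ j" by (rule power_mult_distrib[symmetric])
    also have "(2::real) * 2^(2*n+4) = 2^(2*n+5)" by (simp add: power_Suc[symmetric] del: power_Suc)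
    finally show ?thesis .
  qed
  finally have "root j \<bar>c n j\<bar> \<le> root j ((2^(2*n+5)) ^ j)"
    using False by (intro real_root_le_mono) auto
  also have "\<dots> = 2^(2*n+5)" using False by (simp add: real_root_power_cancel)
  finally show ?thesis .
qed

lemma eventually_root_c_lower_bound: "eventually (\<lambda>j. 3 * real (2*n+2) / 4 \<le> root j \<bar>c n j\<bar>) sequentially"
proof -
  have "eventually (\<lambda>m. real m * (2 * real n + 2) \<le> (4/3::real)^m) at_top"
    by real_asymp
  moreover have "eventually (\<lambda>m::nat. m \<ge> 1) at_top" by (rule eventually_ge_at_top)
  ultimately show ?thesis
  proof eventually_elim
    case (elim m)
    define Q :: real where "Q = real (2*n+2)"
    have Q: "Q > 0" by (simp add: Q_def)
    have mQ: "real m * Q \<le> (4/3)^m" using elim by (simp add: Q_def add.commute)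
    have e34: "3 * Q / 4 = (3/4) * Q" by simp
    have "(3 * Q / 4) ^ m = (3/4)^m * Q^m" by (simp only: e34 power_mult_distrib)
    also have "\<dots> \<le> Q ^ (m-1) / real m"
    proof -
      have "(3/4)^m * Q^m * (real m * Q) \<le> (3/4)^m * Q^m * (4/3)^m"
        using mQ Q by (intro mult_left_mono) auto
      also have "\<dots> = Q^m" by (simp add: power_mult_distrib[symmetric])
      also have "\<dots> = Q^(m-1) * Q" using elim by (cases m) auto
      finally have "(3/4)^m * Q^m * (real m * Q) \<le> Q^(m-1) * Q" .
      then have "(3/4)^m * Q^m * real m \<le> Q^(m-1)" using Q by (simp add: mult_ac)
      then show ?thesis using elim by (simp add: field_simps)
    qed
    also have "\<dots> \<le> c n m" using c_lower_bound[OF elim(2)] by (simp add: Q_def)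
    finally have "(3 * Q / 4) ^ m \<le> \<bar>c n m\<bar>" by simp
    then have "root m ((3 * Q / 4) ^ m) \<le> root m \<bar>c n m\<bar>"
      using elim by (intro real_root_le_mono) auto
    then show ?case using elim Q by (simp add: real_root_power_cancel Q_def)
  qed
qed

lemma c_root_limsup_bounds: "ereal (3 * real (2*n+2) / 4) \<le> c_root_limsup n" "c_root_limsup n \<le> ereal (2^(2*n+5))"
proof -
  show "ereal (3 * real (2*n+2) / 4) \<le> c_root_limsup n"
    unfolding c_root_limsup_def using eventually_root_c_lower_bound[of n]
    by (intro le_Limsup) (auto elim: eventually_mono)
  show "c_root_limsup n \<le> ereal (2^(2*n+5))"
    unfolding c_root_limsup_def using root_c_upper_bound[of _ n]
    by (intro Limsup_bounded) auto
qed

lemma c_root_limsup_real: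
  obtains l where "c_root_limsup n = ereal l" "l \<ge> 3 * real (2*n+2) / 4" "R n = real (2*n+1) / l"
proof -
  from c_root_limsup_bounds[of n] obtain l where l: "c_root_limsup n = ereal l"
    by (cases "c_root_limsup n") auto
  then have "R n = real (2*n+1) / l"
    unfolding R_def c_root_limsup_def[symmetric] by simp
  with l c_root_limsup_bounds[of n] show ?thesis using that by auto
qed

lemma R_bounds: "R n > 0" "R n < 4/3"
proof -
  obtain l where l: "c_root_limsup n = ereal l" "l \<ge> 3 * real (2*n+2) / 4" "R n = real (2*n+1) / l"
    by (rule c_root_limsup_real)
  have "l > 0" by (rule order.strict_trans2[OF _ l(2)]) simp
  then show "R n > 0" using l(3) by simp
  have "R n * l < 4/3 * l" using l(2,3) \<open>l > 0\<close> by simp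
  then show "R n < 4/3" using \<open>l > 0\<close> by simp
qed

definition ybar_fps :: "nat \<Rightarrow> complex fps" where
  "ybar_fps n = Abs_fps (\<lambda>j. complex_of_real ((-1)^j / real (2*n+1)^j * c n j))"

lemma ybar_eq_eval_fps: "ybar n = eval_fps (ybar_fps n)"
  by (simp add: fun_eq_iff ybar_def eval_fps_def ybar_fps_def)

lemma fps_conv_radius_ybar_fps: "fps_conv_radius (ybar_fps n) = ereal (R n)"
proof -
  obtain l where l: "c_root_limsup n = ereal l" "l \<ge> 3 * real (2*n+2) / 4" "R n = real (2*n+1) / l"
    by (rule c_root_limsup_real)
  have lpos: "l > 0" by (rule order.strict_trans2[OF _ l(2)]) simp
  define q where "q = real (2*n+1)"
  have q: "q > 0" by (simp add: q_def)
  have seq: "ereal (root j (norm (fps_nth (ybar_fps n) j))) = ereal (root j \<bar>c n j\<bar>) * ereal (1/q)" for j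
  proof (cases "j = 0")
    case True then show ?thesis by simp
  next
    case False
    have "norm (fps_nth (ybar_fps n) j) = \<bar>c n j\<bar> / q ^ j"
      using norm_of_nat[of "2*n+1", where 'a=complex]
      by (simp add: ybar_fps_def q_def norm_mult norm_divide norm_power)
    then have "root j (norm (fps_nth (ybar_fps n) j)) = root j \<bar>c n j\<bar> / q"
      using False q by (simp add: real_root_divide real_root_power_cancel)
    then show ?thesis by simp
  qed
  have "fps_conv_radius (ybar_fps n) = inverse (limsup (\<lambda>j. ereal (root j \<bar>c n j\<bar>) * ereal (1/q)))"
    unfolding fps_conv_radius_def conv_radius_def seq ..
  also have "\<dots> = inverse (c_root_limsup n * ereal (1/q))"
    unfolding c_root_limsup_def using q by (subst limsup_ereal_mult_right) auto
  also have "\<dots> = ereal (q / l)" using l(1) lpos q by simp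
  also have "q / l = R n" using l(3) by (simp add: q_def)
  finally show ?thesis .
qed

lemma holomorphic_ybar: "ybar n holomorphic_on ball 0 (R n)"
  unfolding ybar_eq_eval_fps by (rule holomorphic_on_eval_fps) (simp add: fps_conv_radius_ybar_fps)

lemma deriv_ybar_0: "deriv (ybar n) 0 = - 1 / of_nat (2*n+1)"
proof -
  have "(eval_fps (ybar_fps n) has_field_derivative eval_fps (fps_deriv (ybar_fps n)) 0) (at 0)"
    by (rule has_field_derivative_eval_fps) (simp add: fps_conv_radius_ybar_fps R_bounds)
  then have "deriv (ybar n) 0 = eval_fps (fps_deriv (ybar_fps n)) 0"
    unfolding ybar_eq_eval_fps by (rule DERIV_imp_deriv)
  also have "\<dots> = - 1 / of_nat (2*n+1)"
    by (simp add: eval_fps_at_0 ybar_fps_def c_1[unfolded One_nat_def])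
  finally show ?thesis .
qed

lemma M_lower_bound: "M n \<ge> 3 * R n / (4 * real (2*n+1))"
proof -
  define \<rho> where "\<rho> = 3 * R n / 4"
  have \<rho>: "\<rho> > 0" "\<rho> < R n" using R_bounds[of n] by (auto simp: \<rho>_def)
  have cont: "continuous_on (cball 0 \<rho>) (ybar n)"
    by (rule holomorphic_on_imp_continuous_on, rule holomorphic_on_subset[OF holomorphic_ybar]) (use \<rho> in auto)
  have sph: "{z. cmod z = 3 * R n / 4} = sphere 0 \<rho>" by (auto simp: \<rho>_def)
  have "compact ((\<lambda>z. cmod (ybar n z)) ` sphere 0 \<rho>)"
    by (rule compact_continuous_image, rule continuous_on_norm, rule continuous_on_subset[OF cont])
       (auto simp: compact_sphere)
  then have bdd: "bdd_above ((\<lambda>z. cmod (ybar n z)) ` sphere 0 \<rho>)"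
    by (auto intro: bounded_imp_bdd_above compact_imp_bounded)
  have nof: "norm (ybar n x) \<le> M n" if "norm (0 - x) = \<rho>" for x
    unfolding M_def sph using that by (intro cSup_upper bdd) auto
  have "norm ((deriv ^^ 1) (ybar n) 0) \<le> fact 1 * M n / \<rho> ^ 1"
    by (rule Cauchy_inequality[OF holomorphic_on_subset[OF holomorphic_ybar] cont \<rho>(1) nof])
       (use \<rho> in auto)
  then have "1 / real (2*n+1) \<le> M n / \<rho>"
    using norm_of_nat[of "2*n+1", where 'a=complex] by (simp add: deriv_ybar_0 norm_divide)
  then show ?thesis using \<rho> by (simp add: \<rho>_def field_simps)
qed

lemma abs_one_minus_le_abs_power_minus_one:
  fixes u :: real and q :: nat
  assumes q: "q \<ge> 1" and u: "u > 0" and t: "u^q \<ge> 2/3"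
  shows "\<bar>1 - u\<bar> \<le> 3 / real q * \<bar>u^q - 1\<bar> * u^2"
proof -
  define S where "S = (\<Sum>i<q. u^i)"
  have eq: "u^q - 1 = (u - 1) * S" unfolding S_def by (rule power_diff_1_eq)
  have key: "real q \<le> 3 * (S * u^2)"
  proof (cases "u \<ge> 1")
    case True
    have "real q = (\<Sum>i<q. 1)" by simp
    also have "\<dots> \<le> (\<Sum>i<q. u^i * u^2)"
    proof (intro sum_mono)
      fix i show "1 \<le> u^i * u^2" using True by (metis one_le_power power_add)
    qed
    also have "\<dots> = S * u^2" by (simp add: S_def sum_distrib_right)
    finally show ?thesis by simp
  next
    case False
    have uq: "u^q \<le> u" using False u q by (metis less_eq_real_def not_le power_decreasing power_one_right)
    have "u^(q+1) = u^q * u" by simp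
    also have "\<dots> \<ge> (2/3) * (2/3)" using t uq
      by (intro mult_mono) auto
    finally have uq1: "u^(q+1) \<ge> 4/9" by simp
    have "real q * (4/9) = (\<Sum>i<q. 4/9)" by simp
    also have "\<dots> \<le> (\<Sum>i<q. u^i * u^2)"
    proof (intro sum_mono)
      fix i assume "i \<in> {..<q}"
      then have "u^(q+1) \<le> u^(i+2)" using False u by (intro power_decreasing) auto
      moreover have "u^(i+2) = u^i * u^2" by (rule power_add)
      ultimately show "4/9 \<le> u^i * u^2" using uq1 by linarith
    qed
    also have "\<dots> = S * u^2" by (simp add: S_def sum_distrib_right)
    finally show ?thesis by simp
  qed
  have S0: "S \<ge> 0" unfolding S_def using u by (intro sum_nonneg) auto
  have "\<bar>1 - u\<bar> = \<bar>u - 1\<bar> * 1" by simp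
  also have "\<dots> \<le> \<bar>u - 1\<bar> * (3 / real q * (S * u^2))"
    using key q by (intro mult_left_mono) (auto simp: field_simps)
  also have "\<dots> = 3 / real q * \<bar>u^q - 1\<bar> * u^2"
    unfolding eq using S0 by (simp add: abs_mult)
  finally show ?thesis .
qed

lemma odd_root_perturbation:
  fixes w e :: real
  assumes q: "odd q" and small: "\<bar>e * w\<bar> \<le> 1/3"
  shows "\<bar>w - root q (w^q * (1 + e * w))\<bar> \<le> 3 / real q * \<bar>e\<bar> * (root q \<bar>w^q * (1 + e * w)\<bar>)^2"
proof -
  define u where "u = root q (1 + e * w)"
  have q1: "q \<ge> 1" using q by (cases q) auto
  have t: "1 + e * w \<ge> 2/3" using small by linarith
  then have u0: "u > 0" and uq: "u^q = 1 + e * w" using q1 by (simp_all add: u_def)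
  have root_eq: "root q (w^q * (1 + e * w)) = w * u"
    unfolding real_root_mult u_def using q by (simp add: odd_real_root_power_cancel)
  have root_abs_eq: "root q \<bar>w^q * (1 + e * w)\<bar> = \<bar>w\<bar> * u"
    using root_eq u0 real_root_abs[of q "w^q * (1 + e * w)"] q1 by (simp add: abs_mult)
  have "\<bar>w - w * u\<bar> = \<bar>w\<bar> * \<bar>1 - u\<bar>" by (simp add: abs_mult[symmetric] algebra_simps)
  also have "\<dots> \<le> \<bar>w\<bar> * (3 / real q * \<bar>e * w\<bar> * u^2)"
    using abs_one_minus_le_abs_power_minus_one[OF q1 u0] uq t by (intro mult_left_mono) auto
  also have "\<dots> = 3 / real q * \<bar>e\<bar> * (\<bar>w\<bar> * u)^2"
    by (simp add: abs_mult power2_eq_square)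
  finally show ?thesis unfolding root_eq root_abs_eq .
qed

lemma odd_power_range:
  fixes y g :: "real \<Rightarrow> real"
  assumes q: "odd q" and cont: "continuous_on {-r..r} y" and xs: "\<bar>xs\<bar> \<le> r" and b: "b \<ge> 0"
    and y_eq: "\<And>z. z \<in> {-r..r} \<Longrightarrow> y z - ys = (z - xs)^q * g z"
    and g_ge: "\<And>z. z \<in> {-r..r} \<Longrightarrow> g z \<ge> b"
  shows "{v. \<bar>v - ys\<bar> \<le> b * (r - \<bar>xs\<bar>)^q} \<subseteq> y ` {-r..r}"
proof
  define d where "d = r - \<bar>xs\<bar>"
  have d: "0 \<le> d" "d \<le> r - xs" "-r - xs \<le> -d" using xs by (auto simp: d_def)
  have r: "r \<in> {-r..r}" "-r \<in> {-r..r}" using xs by auto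
  have "d^q * b \<le> (r - xs)^q * g r"
    using g_ge[OF r(1)] b d by (intro mult_mono power_mono) auto
  then have top: "b * d^q \<le> y r - ys" using y_eq[OF r(1)] by (simp add: mult.commute)
  have neg: "(-r - xs)^q \<le> - (d^q)"
    using power_mono_odd[OF q d(3)] q by simp
  then have "(-r - xs)^q * g (-r) \<le> (-r - xs)^q * b"
    using g_ge[OF r(2)] neg zero_le_power[OF d(1), of q] by (intro mult_left_mono_neg) auto
  also have "\<dots> \<le> - (d^q) * b"
    using neg b by (rule mult_right_mono)
  finally have bot: "y (-r) - ys \<le> - (b * d^q)" using y_eq[OF r(2)] by (simp add: mult.commute)
  fix v assume "v \<in> {v. \<bar>v - ys\<bar> \<le> b * (r - \<bar>xs\<bar>)^q}"
  then have "y (-r) \<le> v" "v \<le> y r" using top bot by (auto simp: d_def)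
  then obtain z where "-r \<le> z" "z \<le> r" "y z = v"
    using IVT'[of y "-r" v r] cont r(1) by auto
  then show "v \<in> y ` {-r..r}" by auto
qed

lemma odd_root_expansion_error:
  fixes y a2 :: "real \<Rightarrow> real"
  assumes q: "odd q" and a1: "a1 > 0"
    and y_eq: "y x = ys + a1 * (x - xs)^q + a2 x * (x - xs)^Suc q"
    and a2: "\<bar>a2 x\<bar> \<le> K" and x: "\<bar>x - xs\<bar> \<le> \<rho>" and small: "K * \<rho> \<le> a1 / 3"
  shows "\<bar>(x - xs) - root q ((y x - ys) / a1)\<bar> \<le> 3 / real q * (K / a1) * (root q \<bar>(y x - ys) / a1\<bar>)^2"
proof -
  have y_div: "(y x - ys) / a1 = (x - xs)^q * (1 + a2 x / a1 * (x - xs))"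
    using y_eq a1 by (simp add: field_simps)
  have "\<bar>a2 x / a1 * (x - xs)\<bar> = \<bar>a2 x\<bar> * \<bar>x - xs\<bar> / a1"
    using a1 by (simp add: abs_mult)
  also have "\<dots> \<le> K * \<rho> / a1"
    using a2 x a1 by (intro divide_right_mono mult_mono) auto
  also have "\<dots> \<le> 1/3" using small a1 by (simp add: field_simps)
  finally have "\<bar>(x - xs) - root q ((y x - ys) / a1)\<bar>
      \<le> 3 / real q * \<bar>a2 x / a1\<bar> * (root q \<bar>(y x - ys) / a1\<bar>)^2"
    unfolding y_div by (rule odd_root_perturbation[OF q])
  also have "\<dots> \<le> 3 / real q * (K / a1) * (root q \<bar>(y x - ys) / a1\<bar>)^2"
    using a2 a1 by (intro mult_right_mono mult_left_mono) (auto simp: divide_right_mono)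
  finally show ?thesis .
qed

lemma odd_power_expansion_range:
  fixes y a2 :: "real \<Rightarrow> real"
  assumes q: "odd q" and a1: "a1 > 0" and xs: "\<bar>xs\<bar> \<le> r"
    and a2: "continuous_on {-r..r} a2" "\<And>z. z \<in> {-r..r} \<Longrightarrow> \<bar>a2 z\<bar> \<le> K"
    and small: "real (Suc q) * K * (r + \<bar>xs\<bar>) \<le> real q * a1"
    and y_eq: "\<And>z. z \<in> {-r..r} \<Longrightarrow> y z = ys + a1 * (z - xs)^q + a2 z * (z - xs)^Suc q"
  shows "{v. \<bar>v - ys\<bar> \<le> a1 / real (Suc q) * (r - \<bar>xs\<bar>)^q} \<subseteq> y ` {-r..r}"
proof (rule odd_power_range[OF q _ xs])
  have "continuous_on {-r..r} (\<lambda>z. ys + a1 * (z - xs)^q + a2 z * (z - xs)^Suc q)"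
    using a2(1) by (intro continuous_intros)
  then show "continuous_on {-r..r} y"
    by (rule continuous_on_cong[THEN iffD1, OF refl, rotated]) (simp add: y_eq)
  fix z assume z: "z \<in> {-r..r}"
  show "y z - ys = (z - xs)^q * (a1 + a2 z * (z - xs))"
    using y_eq[OF z] by (simp add: algebra_simps)
  have "\<bar>a2 z * (z - xs)\<bar> \<le> K * (r + \<bar>xs\<bar>)"
    unfolding abs_mult using a2(2)[OF z] z by (intro mult_mono) auto
  moreover have "K * (r + \<bar>xs\<bar>) \<le> real q * a1 / real (Suc q)"
    using small by (simp add: field_simps)
  moreover have "a1 - real q * a1 / real (Suc q) = a1 / real (Suc q)" by (simp add: field_simps)
  ultimately show "a1 + a2 z * (z - xs) \<ge> a1 / real (Suc q)" by linarith
qed (use a1 in auto)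

theorem lemmaA3:
  fixes n :: nat and r xs ys a1 :: real and y a2 :: "real \<Rightarrow> real"
  defines "I \<equiv> {-r..r}"
  defines "A \<equiv> Sup ((\<lambda>x. \<bar>a2 x\<bar>) ` I)"
  assumes n: "n \<ge> 1"
    and r: "r > 0"
    and xs: "xs \<in> I"
    and reg: "C_k_1_on (2*n+1) I y"
    and a1: "a1 > 0"
    and a2: "continuous_on I a2"
    and yform: "\<forall>x\<in>I. y x = ys + a1 * (x - xs)^(2*n+1) + a2 x * (x - xs)^(2*n+2)"
    and h1: "real (2*n+2) * A / (real (2*n+1) * a1) * (r + \<bar>xs\<bar>) < 1"
    and h2: "A / (a1 * R n) * (r + \<bar>xs\<bar>) < 1/4"
  shows "(\<forall>x\<in>I. \<bar>(x - xs) - root (2*n+1) ((y x - ys) / a1)\<bar>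
            \<le> 4 * M n * A / (a1 * R n) * (root (2*n+1) \<bar>(y x - ys) / a1\<bar>)^2)
         \<and> {v. \<bar>v - ys\<bar> \<le> a1 * (r - \<bar>xs\<bar>)^(2*n+1) / real (2*n+2)} \<subseteq> y ` I"
proof -
  define q where "q = 2*n+1"
  have q: "odd q" by (simp add: q_def)
  have y_eq: "y x = ys + a1 * (x - xs)^q + a2 x * (x - xs)^Suc q" if "x \<in> I" for x
    using yform that by (simp add: q_def)
  have a2_le_A: "\<bar>a2 x\<bar> \<le> A" if "x \<in> I" for x
    unfolding A_def using that a2
    by (intro cSup_upper bounded_imp_bdd_above compact_imp_bounded compact_continuous_image
          continuous_intros) (auto simp: I_def)
  have "A \<ge> 0" using a2_le_A[OF xs] by simp
  have xs_r: "\<bar>xs\<bar> \<le> r" using xs by (auto simp: I_def)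
  have "A * (r + \<bar>xs\<bar>) = R n * (A / (a1 * R n) * (r + \<bar>xs\<bar>)) * a1"
    using R_bounds[of n] a1 by (simp add: field_simps)
  also have "\<dots> \<le> 4/3 * (1/4) * a1"
    using h2 R_bounds[of n] \<open>A \<ge> 0\<close> a1 r by (intro mult_mono mult_right_mono) auto
  finally have A_small: "A * (r + \<bar>xs\<bar>) \<le> a1 / 3" by simp
  have "3 / real q \<le> 4 * M n / R n"
    using M_lower_bound[of n] R_bounds[of n] by (simp add: q_def field_simps)
  then have constant_le: "3 / real q * (A / a1) \<le> 4 * M n * A / (a1 * R n)"
    using mult_right_mono[of "3 / real q" "4 * M n / R n" "A / a1"] \<open>A \<ge> 0\<close> a1 by (simp add: mult.commute)
  have "\<bar>(x - xs) - root q ((y x - ys) / a1)\<bar>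
          \<le> 4 * M n * A / (a1 * R n) * (root q \<bar>(y x - ys) / a1\<bar>)^2" if "x \<in> I" for x
  proof -
    have "\<bar>x - xs\<bar> \<le> r + \<bar>xs\<bar>" using that by (auto simp: I_def)
    from q a1 y_eq[OF that] a2_le_A[OF that] this A_small
    have "\<bar>(x - xs) - root q ((y x - ys) / a1)\<bar> \<le> 3 / real q * (A / a1) * (root q \<bar>(y x - ys) / a1\<bar>)^2"
      by (rule odd_root_expansion_error)
    also have "\<dots> \<le> 4 * M n * A / (a1 * R n) * (root q \<bar>(y x - ys) / a1\<bar>)^2"
      using constant_le by (rule mult_right_mono) simp
    finally show ?thesis .
  qed
  moreover have "{v. \<bar>v - ys\<bar> \<le> a1 / real (Suc q) * (r - \<bar>xs\<bar>)^q} \<subseteq> y ` I"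
  proof -
    have "real (Suc q) * A * (r + \<bar>xs\<bar>) / (real q * a1) < 1"
      using h1 by (simp add: q_def)
    moreover have "real q * a1 > 0" using a1 by (simp add: q_def)
    ultimately have "real (Suc q) * A * (r + \<bar>xs\<bar>) \<le> real q * a1"
      by (simp add: pos_divide_less_eq)
    then show ?thesis
      using odd_power_expansion_range[OF q a1 xs_r a2[unfolded I_def] a2_le_A[unfolded I_def] _
          y_eq[unfolded I_def]]
      by (simp add: I_def)
  qed
  ultimately show ?thesis by (simp add: q_def)
qed

end
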